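(* Let $\theta$ be the automorphism of $\Lambda$ sending $t$ to $-t$. Then $L_l^\theta\otimes_\Lambda L_r$ (where $L_l^\theta$ is $L_l$ with right $\Lambda$-action twisted by $\theta$) is a $\Psi$-$\Psi$-bimodule isomorphic to $M^\tau$.
   Context: $F$ is a field of characteristic $p>0$. $\Psi$ is the $F$-algebra generated by orthogonal idempotents $e_1,\dots,e_p$ summing to $1$ and $x=\sum_{l=2}^pe_{l-1}xe_l$, $\xi=\sum_{l=2}^pe_{l-1}\xi e_l$, subject to $x\xi=\xi x$, $\xi^2=0$. $L_l$: left $\Psi$-module with basis $\{x.x^l,\xi.x^l\mid0\le l\le p-1\}$, $e_f$ acting as identity on $x.x^{p-f},\xi.x^{p-f}$, $x:x.x^l\mapsto x.x^{l+1}$, $\xi.x^l\mapsto\xi.x^{l+1}$ (zero when the exponent would reach $p$), $\xi:x.x^l\mapsto\xi.x^{l+1}$, $\xi.x^l\mapsto0$. $L_r$: right $\Psi$-module with basis $\{x^l.x,x^l.\xi\mid0\le l\le p-1\}$, $e_l$ acting as identity on $x^{l-1}.x,x^{l-1}.\xi$, $x$ raising the exponent $l$, $\xi:x^l.x\mapsto x^{l+1}.\xi$, $x^l.\xi\mapsto0$. $\Lambda$ is the exterior algebra on $t$, acting on the right of $L_l$ by $x.x^l\mapsto\xi.x^l$, $\xi.x^l\mapsto0$, and on the left of $L_r$ by $x^l.x\mapsto x^l.\xi$, $x^l.\xi\mapsto0$. $M=L_l\otimes_\Lambda L_r$. $\tau$ is the automorphism of $\Psi$ fixing $x$ and sending $\xi$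 to $-\xi$; $M^\tau$ is $M$ with its right $\Psi$-action twisted by $\tau$. *)

theory Defs
  imports Main
begin

text \<open>A basis vector of L_l is indexed by (k,l) with k = False for x.x^l
 and k = True for xi.x^l (0 <= l < p); a basis vector of L_r is indexed by (k,l) with
 k = False for x^l.x and k = True for x^l.xi.  Every generator acts by sending a basis vector to a basis vector or to 0;
 this is encoded as a map into option (None meaning 0).\<close>

type_synonym bas = "bool \<times> nat"

definition Bas :: "nat \<Rightarrow> bas set" where
  "Bas p = UNIV \<times> {..<p}"

text \<open>Generators of Psi: idempotents e_f (1 <= f <= p), x, xi.\<close>
datatype gen = E nat | X | Xi

definition Gens :: "nat \<Rightarrow> gen set" where
  "Gens p = {E f | f. 1 \<le> f \<and> f \<le> p} \<union> {X, Xi}"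

text \<open>Left action of the generators of Psi on L_l.\<close>
fun Ll_act :: "nat \<Rightarrow> gen \<Rightarrow> bas \<Rightarrow> bas option" where
  "Ll_act p (E f) (k, l) = (if l = p - f then Some (k, l) else None)"
| "Ll_act p X (k, l) = (if l + 1 < p then Some (k, l + 1) else None)"
| "Ll_act p Xi (k, l) = (if \<not> k \<and> l + 1 < p then Some (True, l + 1) else None)"

text \<open>Right action of the generators of Psi on L_r.\<close>
fun Lr_act :: "nat \<Rightarrow> gen \<Rightarrow> bas \<Rightarrow> bas option" where
  "Lr_act p (E f) (k, l) = (if l = f - 1 then Some (k, l) else None)"
| "Lr_act p X (k, l) = (if l + 1 < p then Some (k, l + 1) else None)"
| "Lr_act p Xi (k, l) = (if \<not> k \<and> l + 1 < p then Some (True, l + 1) else None)"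

text \<open>Right action of t on L_l (x.x^l -> xi.x^l, xi.x^l -> 0).\<close>
fun Ll_t :: "bas \<Rightarrow> bas option" where
  "Ll_t (k, l) = (if \<not> k then Some (True, l) else None)"

text \<open>Left action of t on L_r (x^l.x -> x^l.xi, x^l.xi -> 0).\<close>
fun Lr_t :: "bas \<Rightarrow> bas option" where
  "Lr_t (k, l) = (if \<not> k then Some (True, l) else None)"

definition matof :: "(bas \<Rightarrow> bas option) \<Rightarrow> bas \<Rightarrow> bas \<Rightarrow> 'a::field" where
  "matof f c b = (if f b = Some c then 1 else 0)"

text \<open>The F-tensor product L_l (x)_F L_r: coordinate functions supported on Bas p x Bas p.\<close>
definition TS :: "nat \<Rightarrow> (bas \<times> bas \<Rightarrow> 'a::field) set" where
  "TS p = {w. \<forall>z. z \<notin> Bas p \<times> Bas p \<longrightarrow> w z = 0}"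

definition op1 :: "nat \<Rightarrow> (bas \<Rightarrow> bas \<Rightarrow> 'a::field) \<Rightarrow> (bas \<times> bas \<Rightarrow> 'a) \<Rightarrow> bas \<times> bas \<Rightarrow> 'a" where
  "op1 p P w = (\<lambda>(c, d). if (c, d) \<in> Bas p \<times> Bas p then (\<Sum>b\<in>Bas p. P c b * w (b, d)) else 0)"

definition op2 :: "nat \<Rightarrow> (bas \<Rightarrow> bas \<Rightarrow> 'a::field) \<Rightarrow> (bas \<times> bas \<Rightarrow> 'a) \<Rightarrow> bas \<times> bas \<Rightarrow> 'a" where
  "op2 p Q w = (\<lambda>(c, d). if (c, d) \<in> Bas p \<times> Bas p then (\<Sum>b\<in>Bas p. Q d b * w (c, b)) else 0)"

text \<open>The subspace of L_l (x)_F L_r spanned by (m.t) (x) n - m (x) (t.n), where the right action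
  of t on L_l is given by the matrix A and the left action of t on L_r by the matrix B.  L_l (x)_Lambda L_r is TS p modulo this subspace.\<close>
definition Krel :: "nat \<Rightarrow> (bas \<Rightarrow> bas \<Rightarrow> 'a::field) \<Rightarrow> (bas \<Rightarrow> bas \<Rightarrow> 'a) \<Rightarrow> (bas \<times> bas \<Rightarrow> 'a) set" where
  "Krel p A B = {(\<lambda>z. op1 p A w z - op2 p B w z) | w. w \<in> TS p}"

text \<open>Relations for M = L_l (x)_Lambda L_r and for L_l^theta (x)_Lambda L_r
  (right action of t on L_l replaced by its negative, since theta(t) = -t).\<close>
definition K_M :: "nat \<Rightarrow> (bas \<times> bas \<Rightarrow> 'a::field) set" where
  "K_M p = Krel p (matof Ll_t) (matof Lr_t)"

definition K_theta :: "nat \<Rightarrow> (bas \<times> bas \<Rightarrow> 'a::field) set" where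
  "K_theta p = Krel p (\<lambda>c b. - matof Ll_t c b) (matof Lr_t)"

text \<open>tau fixes the e_f and x and sends xi to -xi.\<close>
definition tau_sign :: "gen \<Rightarrow> 'a::field" where
  "tau_sign g = (if g = Xi then -1 else 1)"

end

theory Submission
  imports Defs
begin

text \<open>The isomorphism is id \<otimes> \<sigma>, where \<sigma> multiplies the basis vectors x^l.\<xi> of L_r by -1.
  Since t and \<xi> are odd for the grading by \<xi>-degree and x, e_f are even, \<sigma> t = -t \<sigma>, which
  turns the relation m.t \<otimes> n = m \<otimes> t.n of M into the twisted relation -(m.t) \<otimes> n = m \<otimes> t.n;
  the left \<Psi>-action is untouched and the right one acquires exactly the signs of \<tau>.
  The Lambda-relations are preserved by \<Psi> because t commutes with the \<Psi>-actions.
  Nothing depends on p or on the characteristic.\<close>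

lemma finite_Bas [simp]: "finite (Bas p)"
  by (simp add: Bas_def)

definition matmul :: "nat \<Rightarrow> (bas \<Rightarrow> bas \<Rightarrow> 'a::field) \<Rightarrow> (bas \<Rightarrow> bas \<Rightarrow> 'a) \<Rightarrow> bas \<Rightarrow> bas \<Rightarrow> 'a" where
  "matmul p P Q c a = (\<Sum>b\<in>Bas p. P c b * Q b a)"

lemma op1_TS: "op1 p P w \<in> TS p"
  by (auto simp: TS_def op1_def)

lemma op2_TS: "op2 p Q w \<in> TS p"
  by (auto simp: TS_def op2_def)

lemma op1_diff: "op1 p P (\<lambda>z. v z - w z) = (\<lambda>z. op1 p P v z - op1 p P w z)"
  by (rule ext) (auto simp: op1_def sum_subtractf algebra_simps)

lemma op2_diff: "op2 p Q (\<lambda>z. v z - w z) = (\<lambda>z. op2 p Q v z - op2 p Q w z)"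
  by (rule ext) (auto simp: op2_def sum_subtractf algebra_simps)

lemma op1_uminus: "op1 p P (\<lambda>z. - w z) = (\<lambda>z. - op1 p P w z)"
  by (rule ext) (auto simp: op1_def sum_negf)

lemma op2_uminus: "op2 p Q (\<lambda>z. - w z) = (\<lambda>z. - op2 p Q w z)"
  by (rule ext) (auto simp: op2_def sum_negf)

lemma op1_uminus_matrix: "op1 p (\<lambda>c b. - P c b) w = (\<lambda>z. - op1 p P w z)"
  by (rule ext) (auto simp: op1_def sum_negf)

lemma op1_op2_commute: "op1 p P (op2 p Q w) = op2 p Q (op1 p P w)"
proof (rule ext, clarsimp)
  fix c d
  have "(\<Sum>b\<in>Bas p. P c b * (\<Sum>a\<in>Bas p. Q d a * w (b, a)))
      = (\<Sum>b\<in>Bas p. \<Sum>a\<in>Bas p. Q d a * (P c b * w (b, a)))"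
    by (simp add: sum_distrib_left algebra_simps)
  also have "\<dots> = (\<Sum>a\<in>Bas p. Q d a * (\<Sum>b\<in>Bas p. P c b * w (b, a)))"
    by (subst sum.swap) (simp add: sum_distrib_left)
  finally show "op1 p P (op2 p Q w) (c, d) = op2 p Q (op1 p P w) (c, d)"
    by (auto simp: op1_def op2_def intro!: sum.cong)
qed

lemma op1_op1: "op1 p P (op1 p Q w) = op1 p (matmul p P Q) w"
proof (rule ext, clarsimp)
  fix c d
  have "(\<Sum>b\<in>Bas p. P c b * (\<Sum>a\<in>Bas p. Q b a * w (a, d)))
      = (\<Sum>a\<in>Bas p. matmul p P Q c a * w (a, d))"
    unfolding matmul_def sum_distrib_left sum_distrib_right
    by (subst sum.swap) (simp add: algebra_simps)
  then show "op1 p P (op1 p Q w) (c, d) = op1 p (matmul p P Q) w (c, d)"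
    by (auto simp: op1_def intro!: sum.cong)
qed

lemma op2_op2: "op2 p P (op2 p Q w) = op2 p (matmul p P Q) w"
proof (rule ext, clarsimp)
  fix c d
  have "(\<Sum>b\<in>Bas p. P d b * (\<Sum>a\<in>Bas p. Q b a * w (c, a)))
      = (\<Sum>a\<in>Bas p. matmul p P Q d a * w (c, a))"
    unfolding matmul_def sum_distrib_left sum_distrib_right
    by (subst sum.swap) (simp add: algebra_simps)
  then show "op2 p P (op2 p Q w) (c, d) = op2 p (matmul p P Q) w (c, d)"
    by (auto simp: op2_def intro!: sum.cong)
qed

lemma op1_cong_Bas:
  assumes "\<And>c b. c \<in> Bas p \<Longrightarrow> b \<in> Bas p \<Longrightarrow> P c b = P' c b"
  shows "op1 p P w = op1 p P' w"
  by (rule ext) (auto simp: op1_def assms intro!: sum.cong)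

lemma op2_cong_Bas:
  assumes "\<And>c b. c \<in> Bas p \<Longrightarrow> b \<in> Bas p \<Longrightarrow> Q c b = Q' c b"
  shows "op2 p Q w = op2 p Q' w"
  by (rule ext) (auto simp: op2_def assms intro!: sum.cong)

lemma matmul_uminus_left: "matmul p (\<lambda>c b. - P c b) Q = (\<lambda>c a. - matmul p P Q c a)"
  by (intro ext) (simp add: matmul_def sum_negf)

lemma matmul_uminus_right: "matmul p P (\<lambda>c b. - Q c b) = (\<lambda>c a. - matmul p P Q c a)"
  by (intro ext) (simp add: matmul_def sum_negf)

lemma matmul_matof:
  "matmul p (matof f) (matof g) c a =
     (if \<exists>b\<in>Bas p. g a = Some b \<and> f b = Some c then 1 else (0::'a::field))"
proof (cases "g a")
  case None
  then show ?thesis by (simp add: matmul_def matof_def)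
next
  case (Some b0)
  have "matmul p (matof f) (matof g) c a = (\<Sum>b\<in>Bas p. if b = b0 then matof f c b else (0::'a))"
    unfolding matmul_def by (rule sum.cong) (auto simp: matof_def Some)
  then show ?thesis by (auto simp: Some matof_def)
qed

lemma zero_in_Krel: "(\<lambda>z. 0) \<in> Krel p A B"
proof -
  have "(\<lambda>z. 0) = (\<lambda>z. op1 p A (\<lambda>_. 0) z - op2 p B (\<lambda>_. 0) z)"
    by (auto simp: op1_def op2_def)
  then show ?thesis
    unfolding Krel_def TS_def by blast
qed

lemma Krel_op1_closed:
  assumes "\<And>c a. c \<in> Bas p \<Longrightarrow> a \<in> Bas p \<Longrightarrow> matmul p P A c a = matmul p A P c a"
  shows "op1 p P ` Krel p A B \<subseteq> Krel p A B"
proof (rule image_subsetI)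
  fix y assume "y \<in> Krel p A B"
  then obtain w where w: "w \<in> TS p" and y: "y = (\<lambda>z. op1 p A w z - op2 p B w z)"
    unfolding Krel_def by blast
  have "op1 p P (op1 p A w) = op1 p A (op1 p P w)"
    unfolding op1_op1 by (rule op1_cong_Bas) (rule assms)
  then have "op1 p P (\<lambda>z. op1 p A w z - op2 p B w z)
      = (\<lambda>z. op1 p A (op1 p P w) z - op2 p B (op1 p P w) z)"
    by (simp add: op1_diff op1_op2_commute)
  then show "op1 p P y \<in> Krel p A B"
    unfolding Krel_def y using op1_TS by auto
qed

lemma Krel_op2_closed:
  assumes "\<And>c a. c \<in> Bas p \<Longrightarrow> a \<in> Bas p \<Longrightarrow> matmul p Q B c a = matmul p B Q c a"
  shows "op2 p Q ` Krel p A B \<subseteq> Krel p A B"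
proof (rule image_subsetI)
  fix y assume "y \<in> Krel p A B"
  then obtain w where w: "w \<in> TS p" and y: "y = (\<lambda>z. op1 p A w z - op2 p B w z)"
    unfolding Krel_def by blast
  have "op2 p Q (op2 p B w) = op2 p B (op2 p Q w)"
    unfolding op2_op2 by (rule op2_cong_Bas) (rule assms)
  then have "op2 p Q (\<lambda>z. op1 p A w z - op2 p B w z)
      = (\<lambda>z. op1 p A (op2 p Q w) z - op2 p B (op2 p Q w) z)"
    by (simp add: op2_diff op1_op2_commute)
  then show "op2 p Q y \<in> Krel p A B"
    unfolding Krel_def y using op2_TS by auto
qed

lemma Ll_act_commutes_Ll_t:
  "c \<in> Bas p \<Longrightarrow> a \<in> Bas p \<Longrightarrow>
    matmul p (matof (Ll_act p g)) (matof Ll_t) c a = (matmul p (matof Ll_t) (matof (Ll_act p g)) c a :: 'a::field)"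
  unfolding matmul_matof by (cases g; cases a; cases c; auto simp: Bas_def split: if_splits)

lemma Lr_act_commutes_Lr_t:
  "c \<in> Bas p \<Longrightarrow> a \<in> Bas p \<Longrightarrow>
    matmul p (matof (Lr_act p g)) (matof Lr_t) c a = (matmul p (matof Lr_t) (matof (Lr_act p g)) c a :: 'a::field)"
  unfolding matmul_matof by (cases g; cases a; cases c; auto simp: Bas_def split: if_splits)

lemma K_theta_op1_closed: "op1 p (matof (Ll_act p g)) ` K_theta p \<subseteq> K_theta p"
  unfolding K_theta_def
  by (rule Krel_op1_closed) (simp add: matmul_uminus_left matmul_uminus_right Ll_act_commutes_Ll_t)

lemma K_theta_op2_closed: "op2 p (matof (Lr_act p g)) ` K_theta p \<subseteq> K_theta p"
  unfolding K_theta_def by (rule Krel_op2_closed) (rule Lr_act_commutes_Lr_t)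

definition xi_sign :: "bas \<Rightarrow> 'a::field" where
  "xi_sign b = (if fst b then -1 else 1)"

definition sign_twist :: "(bas \<times> bas \<Rightarrow> 'a::field) \<Rightarrow> bas \<times> bas \<Rightarrow> 'a" where
  "sign_twist w = (\<lambda>(c, d). xi_sign d * w (c, d))"

definition homogeneous :: "'a::field \<Rightarrow> (bas \<Rightarrow> bas \<Rightarrow> 'a) \<Rightarrow> bool" where
  "homogeneous s Q \<longleftrightarrow> (\<forall>d b. xi_sign d * Q d b = s * (Q d b * xi_sign b))"

lemma sign_twist_apply: "sign_twist w (c, d) = xi_sign d * w (c, d)"
  by (simp add: sign_twist_def)

lemma sign_twist_sign_twist [simp]: "sign_twist (sign_twist w) = w"
  by (rule ext) (auto simp: sign_twist_def xi_sign_def)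

lemma sign_twist_TS: "w \<in> TS p \<Longrightarrow> sign_twist w \<in> TS p"
  by (auto simp: TS_def sign_twist_def)

lemma sign_twist_linear: "sign_twist (\<lambda>z. c * v z + w z) = (\<lambda>z. c * sign_twist v z + sign_twist w z)"
  by (rule ext) (auto simp: sign_twist_def algebra_simps)

lemma sign_twist_diff: "sign_twist (\<lambda>z. v z - w z) = (\<lambda>z. sign_twist v z - sign_twist w z)"
  by (rule ext) (auto simp: sign_twist_def algebra_simps)

lemma sign_twist_op1: "sign_twist (op1 p P w) = op1 p P (sign_twist w)"
  by (rule ext) (auto simp: sign_twist_def op1_def sum_distrib_left algebra_simps)

lemma sign_twist_op2:
  assumes "homogeneous s Q"
  shows "sign_twist (op2 p Q w) = (\<lambda>z. s * op2 p Q (sign_twist w) z)"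
proof (rule ext, clarify)
  fix c d
  have "xi_sign d * (\<Sum>b\<in>Bas p. Q d b * w (c, b))
      = (\<Sum>b\<in>Bas p. s * (Q d b * (xi_sign b * w (c, b))))"
    unfolding sum_distrib_left
  proof (rule sum.cong)
    fix b
    have "xi_sign d * Q d b = s * (Q d b * xi_sign b)"
      using assms unfolding homogeneous_def by blast
    then show "xi_sign d * (Q d b * w (c, b)) = s * (Q d b * (xi_sign b * w (c, b)))"
      by (metis mult.assoc)
  qed simp
  then show "sign_twist (op2 p Q w) (c, d) = s * op2 p Q (sign_twist w) (c, d)"
    by (simp add: sign_twist_apply op2_def sum_distrib_left)
qed

lemma homogeneous_Lr_t: "homogeneous (-1) (matof Lr_t)"
  by (auto simp: homogeneous_def matof_def xi_sign_def split: if_splits)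

lemma homogeneous_Lr_act: "homogeneous (tau_sign g) (matof (Lr_act p g))"
  by (cases g) (auto simp: homogeneous_def matof_def xi_sign_def tau_sign_def split: if_splits)

lemma sign_twist_Krel_subset:
  assumes "homogeneous (-1) B"
  shows "sign_twist ` Krel p A B \<subseteq> Krel p (\<lambda>c b. - A c b) B"
proof (rule image_subsetI)
  fix y assume "y \<in> Krel p A B"
  then obtain w where w: "w \<in> TS p" and y: "y = (\<lambda>z. op1 p A w z - op2 p B w z)"
    unfolding Krel_def by blast
  let ?u = "\<lambda>z. - sign_twist w z"
  have "sign_twist (\<lambda>z. op1 p A w z - op2 p B w z)
      = (\<lambda>z. op1 p (\<lambda>c b. - A c b) ?u z - op2 p B ?u z)"
    by (simp add: sign_twist_diff sign_twist_op1 sign_twist_op2 [OF assms]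
        op1_uminus_matrix op1_uminus op2_uminus)
  moreover have "?u \<in> TS p"
    using sign_twist_TS [OF w] by (auto simp: TS_def)
  ultimately show "sign_twist y \<in> Krel p (\<lambda>c b. - A c b) B"
    unfolding Krel_def y by blast
qed

lemma sign_twist_Krel:
  assumes "homogeneous (-1) B"
  shows "sign_twist ` Krel p A B = Krel p (\<lambda>c b. - A c b) B"
proof
  show "sign_twist ` Krel p A B \<subseteq> Krel p (\<lambda>c b. - A c b) B"
    using assms by (rule sign_twist_Krel_subset)
  have "Krel p (\<lambda>c b. - A c b) B = sign_twist ` sign_twist ` Krel p (\<lambda>c b. - A c b) B"
    by (simp add: image_image)
  also have "\<dots> \<subseteq> sign_twist ` Krel p A B"
    using sign_twist_Krel_subset [OF assms, where A = "\<lambda>c b. - A c b"] by auto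
  finally show "Krel p (\<lambda>c b. - A c b) B \<subseteq> sign_twist ` Krel p A B" .
qed

lemma sign_twist_in_K_M_iff: "sign_twist w \<in> K_M p \<longleftrightarrow> w \<in> K_theta p"
proof -
  have "K_theta p = sign_twist ` K_M p"
    unfolding K_M_def K_theta_def by (simp add: sign_twist_Krel homogeneous_Lr_t)
  then show ?thesis
    by (metis (no_types, lifting) image_iff sign_twist_sign_twist)
qed

theorem lemma28:
  fixes p :: nat
  assumes "p > 0" and "CHAR('a::field) = p"
  shows
    "(\<forall>g\<in>Gens p.
        op1 p (matof (Ll_act p g)) ` (K_theta p :: (bas \<times> bas \<Rightarrow> 'a) set) \<subseteq> K_theta p \<and>
        op2 p (matof (Lr_act p g)) ` (K_theta p :: (bas \<times> bas \<Rightarrow> 'a) set) \<subseteq> K_theta p)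
   \<and> (\<exists>\<phi> :: (bas \<times> bas \<Rightarrow> 'a) \<Rightarrow> (bas \<times> bas \<Rightarrow> 'a).
        \<phi> ` TS p \<subseteq> TS p
      \<and> (\<forall>v\<in>TS p. \<forall>w\<in>TS p. \<forall>c. \<phi> (\<lambda>z. c * v z + w z) = (\<lambda>z. c * \<phi> v z + \<phi> w z))
      \<and> (\<forall>w\<in>TS p. \<phi> w \<in> K_M p \<longleftrightarrow> w \<in> K_theta p)
      \<and> (\<forall>v\<in>TS p. \<exists>w\<in>TS p. (\<lambda>z. \<phi> w z - v z) \<in> K_M p)
      \<and> (\<forall>g\<in>Gens p. \<forall>w\<in>TS p.
           (\<lambda>z. \<phi> (op1 p (matof (Ll_act p g)) w) z - op1 p (matof (Ll_act p g)) (\<phi> w) z) \<in> K_M p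
         \<and> (\<lambda>z. \<phi> (op2 p (matof (Lr_act p g)) w) z
                - tau_sign g * op2 p (matof (Lr_act p g)) (\<phi> w) z) \<in> K_M p))"
proof (intro conjI ballI allI exI [of _ sign_twist])
  have zero: "(\<lambda>z. 0) \<in> K_M p"
    unfolding K_M_def by (rule zero_in_Krel)
  fix g
  show "op1 p (matof (Ll_act p g)) ` K_theta p \<subseteq> K_theta p"
    by (rule K_theta_op1_closed)
  show "op2 p (matof (Lr_act p g)) ` K_theta p \<subseteq> K_theta p"
    by (rule K_theta_op2_closed)
  show "sign_twist ` TS p \<subseteq> TS p"
    using sign_twist_TS by blast
  show "sign_twist (\<lambda>z. c * v z + w z) = (\<lambda>z. c * sign_twist v z + sign_twist w z)" for v w c
    by (rule sign_twist_linear)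
  fix w :: "bas \<times> bas \<Rightarrow> 'a"
  show "sign_twist w \<in> K_M p \<longleftrightarrow> w \<in> K_theta p"
    by (rule sign_twist_in_K_M_iff)
  show "\<exists>u\<in>TS p. (\<lambda>z. sign_twist u z - w z) \<in> K_M p" if "w \<in> TS p"
    using that zero by (intro bexI [of _ "sign_twist w"]) (simp_all add: sign_twist_TS)
  show "(\<lambda>z. sign_twist (op1 p (matof (Ll_act p g)) w) z
        - op1 p (matof (Ll_act p g)) (sign_twist w) z) \<in> K_M p"
    using zero by (simp add: sign_twist_op1)
  show "(\<lambda>z. sign_twist (op2 p (matof (Lr_act p g)) w) z
        - tau_sign g * op2 p (matof (Lr_act p g)) (sign_twist w) z) \<in> K_M p"
    using zero by (simp add: sign_twist_op2 [OF homogeneous_Lr_act])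
qed

end
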